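(* Let $\alpha\in\mathbb{N}_0$ and $M\ge0$. (a) For all $y\in C^{(2\alpha+4)}(0,\infty)$ and $x>0$, $$x^2(x^{-1}D_x)^{2\alpha+4}\big[x^{2\alpha+2}y(x)\big]=\Big[D_x^2+\frac{2\alpha+1}{x}D_x-\frac{4\alpha+4}{x^2}\Big]^{\alpha+2}y(x).$$ (b) For every $\lambda\ge0$ the Bessel-type function $J_\lambda^{\alpha,M}$ satisfies, for $x>0$, $$\Big\{\big[\widetilde L_{2,x}^{\alpha}+\lambda^2\big]+\frac{M}{2^{2\alpha+2}(\alpha+2)!}\big[\widetilde L_{2\alpha+4,x}^{\alpha}+\lambda^{2\alpha+4}\big]\Big\}J_\lambda^{\alpha,M}(x)=0.$$ (c) For every $\lambda\ge0$, $\big[\widetilde L_{2\alpha+4,x}^{\alpha}+\lambda^{2\alpha+4}\big]K_\lambda^{\alpha}(x)=0$ for $x>0$.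
   Context: $\widetilde L_{2,x}^{\alpha}y(x)=x^{-2\alpha-1}D_x[x^{2\alpha+1}D_xy(x)]=y''+\frac{2\alpha+1}{x}y'$ and $\widetilde L_{2\alpha+4,x}^{\alpha}y(x)=(-1)^{\alpha+1}x^2(x^{-1}D_x)^{2\alpha+4}[x^{2\alpha+2}y(x)]$, where $(x^{-1}D_x)^k$ is the $k$-fold application of $y\mapsto x^{-1}y'$. For $\gamma>-1$, $\lambda\ge0$: $J_\lambda^{\gamma}(x)={}_0F_1(-;\gamma+1;-\tfrac14(\lambda x)^2)=2^{\gamma}\Gamma(\gamma+1)(\lambda x)^{-\gamma}J_\gamma(\lambda x)$ (normalized Bessel function). The Bessel-type functions are $J_\lambda^{\alpha,M}(x)=J_\lambda^{\alpha}(x)+M K_\lambda^{\alpha}(x)$ with $K_\lambda^{\alpha}(x)=-k_\lambda^{\alpha}x^2J_\lambda^{\alpha+2}(x)$, $k_\lambda^{\alpha}=\frac{(\lambda/2)^{2\alpha+4}}{(\alpha+1)(\alpha+2)!}$. *)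

theory Defs
  imports "HOL-Analysis.Analysis"
begin

definition Cn_on :: "nat \<Rightarrow> real set \<Rightarrow> (real \<Rightarrow> real) \<Rightarrow> bool" where
  "Cn_on n S y \<longleftrightarrow>
     (\<forall>j<n. \<forall>x\<in>S. ((deriv ^^ j) y has_real_derivative (deriv ^^ Suc j) y x) (at x))
     \<and> continuous_on S ((deriv ^^ n) y)"

definition xinvD :: "(real \<Rightarrow> real) \<Rightarrow> (real \<Rightarrow> real)" where
  "xinvD f = (\<lambda>x. deriv f x / x)"

definition L2 :: "nat \<Rightarrow> (real \<Rightarrow> real) \<Rightarrow> (real \<Rightarrow> real)" where
  "L2 \<alpha> y = (\<lambda>x. deriv (deriv y) x + (2 * real \<alpha> + 1) / x * deriv y x)"

(* \<tilde>L_{2\<alpha>+4,x}^\<alpha> y = (-1)^(\<alpha>+1) x^2 (x^{-1}D_x)^{2\<alpha>+4} [x^{2\<alpha>+2} y(x)] *)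
definition Lhigh :: "nat \<Rightarrow> (real \<Rightarrow> real) \<Rightarrow> (real \<Rightarrow> real)" where
  "Lhigh \<alpha> y = (\<lambda>x. (-1) ^ (\<alpha> + 1) * x ^ 2 *
      (xinvD ^^ (2 * \<alpha> + 4)) (\<lambda>t. t ^ (2 * \<alpha> + 2) * y t) x)"

definition Bop :: "nat \<Rightarrow> (real \<Rightarrow> real) \<Rightarrow> (real \<Rightarrow> real)" where
  "Bop \<alpha> y = (\<lambda>x. deriv (deriv y) x + (2 * real \<alpha> + 1) / x * deriv y x
                    - (4 * real \<alpha> + 4) / x ^ 2 * y x)"

definition hyp0F1 :: "real \<Rightarrow> real \<Rightarrow> real" where
  "hyp0F1 b z = (\<Sum>k. z ^ k / (pochhammer b k * fact k))"

definition besselJ :: "real \<Rightarrow> real \<Rightarrow> real \<Rightarrow> real" where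
  "besselJ \<gamma> lam x = hyp0F1 (\<gamma> + 1) (- ((lam * x) ^ 2) / 4)"

definition kconst :: "nat \<Rightarrow> real \<Rightarrow> real" where
  "kconst \<alpha> lam = (lam / 2) ^ (2 * \<alpha> + 4) / ((real \<alpha> + 1) * fact (\<alpha> + 2))"

definition besselK :: "nat \<Rightarrow> real \<Rightarrow> real \<Rightarrow> real" where
  "besselK \<alpha> lam x = - kconst \<alpha> lam * x ^ 2 * besselJ (real \<alpha> + 2) lam x"

definition besselJM :: "nat \<Rightarrow> real \<Rightarrow> real \<Rightarrow> real \<Rightarrow> real" where
  "besselJM \<alpha> M lam x = besselJ (real \<alpha>) lam x + M * besselK \<alpha> lam x"

end

theory Submission
  imports Defs
begin

(*
  (a) Put \<theta> = x D_x.  Both sides are products of the commuting first-order operators \<theta> - c,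
  divided by a power of x: x^-1 D_x maps Q x^-n to ((\<theta> - n) Q) x^(-n-2), the weight
  x^(2\<alpha>+2) shifts every c by 2\<alpha> + 2, and one factor of the Bessel operator maps Q x^-n to
  ((\<theta> - (n - 2\<alpha> - 2)) (\<theta> - (n + 2)) Q) x^(-n-2).  The two resulting multisets of shifts,
  {2k - 2\<alpha> - 2 | k < 2\<alpha> + 4} and {2k - 2\<alpha> - 2, 2k + 2 | k < \<alpha> + 2}, coincide.

  (b), (c) All functions involved are even entire power series \<Sum>_k c_k x^(2k).  On coefficient
  sequences L2 becomes a first-order recurrence and Lhigh a shift by \<alpha> + 2 with a Pochhammer
  factor, so both identities reduce to factorial identities between the coefficients of
  J^\<alpha> and J^(\<alpha>+2).
*)

section \<open>Euler operators and part (a)\<close>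

fun differentiable_pos :: "nat \<Rightarrow> (real \<Rightarrow> real) \<Rightarrow> bool" where
  "differentiable_pos 0 g \<longleftrightarrow> True"
| "differentiable_pos (Suc k) g \<longleftrightarrow> (\<forall>x>0. g differentiable (at x)) \<and> differentiable_pos k (deriv g)"

lemma real_differentiable_imp_DERIV_deriv:
  "(f :: real \<Rightarrow> real) differentiable (at x) \<Longrightarrow> (f has_real_derivative deriv f x) (at x)"
  by (simp add: DERIV_deriv_iff_real_differentiable)

lemma deriv_cong_pos:
  assumes "\<forall>t>0. g t = h t" "(x::real) > 0"
  shows "deriv g x = deriv h x"
proof (rule deriv_cong_ev[OF _ refl])
  have "\<forall>\<^sub>F t in nhds x. t > 0"
    using assms(2) by (simp add: eventually_nhds_in_open[of "{0<..}", simplified])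
  then show "\<forall>\<^sub>F t in nhds x. g t = h t"
    by eventually_elim (use assms in auto)
qed

lemma differentiable_cong_pos:
  fixes g h :: "real \<Rightarrow> real"
  assumes "\<forall>t>0. g t = h t" "x > 0" "g differentiable (at x)"
  shows "h differentiable (at x)"
proof -
  have "(h has_real_derivative deriv g x) (at x)"
    using real_differentiable_imp_DERIV_deriv[OF assms(3)]
    by (rule has_field_derivative_transform_within_open[of _ _ _ "{0<..}"]) (use assms in auto)
  then show ?thesis using real_differentiable_def by blast
qed

lemma differentiable_pos_cong:
  "differentiable_pos k g \<Longrightarrow> \<forall>t>0. g t = h t \<Longrightarrow> differentiable_pos k h"
proof (induction k arbitrary: g h)
  case (Suc k)
  have "\<forall>t>0. deriv g t = deriv h t" using deriv_cong_pos Suc.prems(2) by blast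
  then show ?case
    using Suc.prems Suc.IH[of "deriv g" "deriv h"] differentiable_cong_pos[OF Suc.prems(2)] by auto
qed simp

lemma differentiable_pos_Suc_imp: "differentiable_pos (Suc k) g \<Longrightarrow> differentiable_pos k g"
  by (induction k arbitrary: g) auto

lemma differentiable_pos_add_imp: "differentiable_pos (m + k) g \<Longrightarrow> differentiable_pos k g"
proof (induction m)
  case (Suc m)
  then show ?case using differentiable_pos_Suc_imp[of "m + k" g] by simp
qed simp

lemma differentiable_pos_add:
  "differentiable_pos k f \<Longrightarrow> differentiable_pos k g \<Longrightarrow> differentiable_pos k (\<lambda>x. f x + g x)"
proof (induction k arbitrary: f g)
  case (Suc k)
  have d: "((\<lambda>x. f x + g x) has_real_derivative (deriv f t + deriv g t)) (at t)" if "t > 0" for t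
    using Suc.prems that by (intro DERIV_add real_differentiable_imp_DERIV_deriv) auto
  have "differentiable_pos k (\<lambda>t. deriv f t + deriv g t)"
    using Suc by simp
  then have "differentiable_pos k (deriv (\<lambda>x. f x + g x))"
    by (rule differentiable_pos_cong) (use DERIV_imp_deriv[OF d] in simp)
  then show ?case using d real_differentiable_def by auto
qed simp

lemma differentiable_pos_mult:
  "differentiable_pos k f \<Longrightarrow> differentiable_pos k g \<Longrightarrow> differentiable_pos k (\<lambda>x. f x * g x)"
proof (induction k arbitrary: f g)
  case (Suc k)
  have d: "((\<lambda>x. f x * g x) has_real_derivative (deriv f t * g t + f t * deriv g t)) (at t)"
    if "t > 0" for t
    using Suc.prems that
    by (auto intro!: derivative_eq_intros real_differentiable_imp_DERIV_deriv)
  have "differentiable_pos k (\<lambda>t. deriv f t * g t + f t * deriv g t)"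
    using Suc differentiable_pos_Suc_imp[OF Suc.prems(1)] differentiable_pos_Suc_imp[OF Suc.prems(2)]
    by (intro differentiable_pos_add Suc.IH) auto
  then have "differentiable_pos k (deriv (\<lambda>x. f x * g x))"
    by (rule differentiable_pos_cong) (use DERIV_imp_deriv[OF d] in simp)
  then show ?case using d real_differentiable_def by auto
qed simp

lemma differentiable_pos_const: "differentiable_pos k (\<lambda>x. c)"
  by (induction k arbitrary: c) simp_all

lemma differentiable_pos_ident: "differentiable_pos k (\<lambda>x. x)"
  by (cases k) (simp_all add: differentiable_pos_const)

lemma differentiable_pos_power: "differentiable_pos k (\<lambda>x. x ^ m)"
  by (induction m) (simp_all add: differentiable_pos_const differentiable_pos_mult[OF differentiable_pos_ident])

lemma differentiable_pos_diff:
  "differentiable_pos k f \<Longrightarrow> differentiable_pos k g \<Longrightarrow> differentiable_pos k (\<lambda>x. f x - g x)"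
  using differentiable_pos_add[of k f "\<lambda>x. (-1) * g x"]
    differentiable_pos_mult[OF differentiable_pos_const, of k g "-1"] by simp

lemma differentiable_posI:
  "(\<And>j x. j < n \<Longrightarrow> x > 0 \<Longrightarrow> (deriv ^^ j) g differentiable (at x)) \<Longrightarrow> differentiable_pos n g"
proof (induction n arbitrary: g)
  case (Suc n)
  have "(deriv ^^ j) (deriv g) differentiable (at x)" if "j < n" "x > 0" for j x
    using Suc.prems[of "Suc j" x] that by (simp only: funpow_Suc_right o_def)
  then show ?case using Suc.prems[of 0] Suc.IH by simp
qed simp

lemma Cn_on_imp_differentiable_pos: "Cn_on n {0<..} y \<Longrightarrow> differentiable_pos n y"
  unfolding Cn_on_def by (intro differentiable_posI) (auto simp: real_differentiable_def)

definition euler :: "real \<Rightarrow> (real \<Rightarrow> real) \<Rightarrow> real \<Rightarrow> real" where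
  "euler c g = (\<lambda>x. x * deriv g x - c * g x)"

lemma differentiable_pos_euler: "differentiable_pos (Suc k) g \<Longrightarrow> differentiable_pos k (euler c g)"
  unfolding euler_def using differentiable_pos_Suc_imp[of k g]
  by (intro differentiable_pos_diff differentiable_pos_mult differentiable_pos_ident
      differentiable_pos_const) auto

lemma differentiable_pos_foldr_euler:
  "differentiable_pos (length cs + k) g \<Longrightarrow> differentiable_pos k (foldr euler cs g)"
proof (induction cs arbitrary: k)
  case (Cons c cs)
  then show ?case using differentiable_pos_euler Cons.IH[of "Suc k"] by simp
qed simp

lemma euler_cong_pos: "\<forall>t>0. g t = h t \<Longrightarrow> \<forall>t>0. euler c g t = euler c h t"
  using deriv_cong_pos by (simp add: euler_def)

lemma has_real_derivative_euler:
  assumes "differentiable_pos 2 g" "x > 0"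
  shows "(euler d g has_real_derivative (deriv g x + x * deriv (deriv g) x - d * deriv g x)) (at x)"
proof -
  have "g differentiable (at x)" "deriv g differentiable (at x)"
    using assms by (auto simp: numeral_2_eq_2)
  then show ?thesis unfolding euler_def
    by (auto intro!: derivative_eq_intros real_differentiable_imp_DERIV_deriv simp: algebra_simps)
qed

lemma euler_euler:
  assumes "differentiable_pos 2 g" "x > 0"
  shows "euler c (euler d g) x
    = x\<^sup>2 * deriv (deriv g) x + (1 - c - d) * x * deriv g x + c * d * g x"
proof -
  have deriv_euler: "deriv (euler d g) x = deriv g x + x * deriv (deriv g) x - d * deriv g x"
    by (rule DERIV_imp_deriv[OF has_real_derivative_euler[OF assms]])
  show ?thesis
    unfolding euler_def[of c] deriv_euler by (simp add: euler_def algebra_simps power2_eq_square)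
qed

lemma euler_commute:
  "differentiable_pos 2 g \<Longrightarrow> x > 0 \<Longrightarrow> euler c (euler d g) x = euler d (euler c g) x"
  by (simp add: euler_euler algebra_simps)

lemma foldr_euler_move:
  "differentiable_pos (length (ds @ c # es)) g
    \<Longrightarrow> \<forall>x>0. foldr euler (ds @ c # es) g x = euler c (foldr euler (ds @ es) g) x"
proof (induction ds)
  case (Cons d ds)
  let ?h = "foldr euler (ds @ es) g"
  have IH: "\<forall>x>0. foldr euler (ds @ c # es) g x = euler c ?h x"
    using Cons differentiable_pos_Suc_imp[of "length (ds @ c # es)" g] by simp
  have h: "differentiable_pos 2 ?h"
    using differentiable_pos_foldr_euler[of "ds @ es" 2 g] Cons.prems by (simp add: add.commute)
  show ?case
  proof (intro allI impI)
    fix x :: real assume "x > 0"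
    then have "foldr euler ((d # ds) @ c # es) g x = euler d (euler c ?h) x"
      using euler_cong_pos[OF IH] by simp
    also have "\<dots> = euler c (euler d ?h) x" using euler_commute[OF h \<open>x > 0\<close>] by simp
    finally show "foldr euler ((d # ds) @ c # es) g x = euler c (foldr euler ((d # ds) @ es) g) x"
      by simp
  qed
qed simp

lemma foldr_euler_perm:
  "mset cs = mset ds \<Longrightarrow> differentiable_pos (length cs) g
    \<Longrightarrow> \<forall>x>0. foldr euler cs g x = foldr euler ds g x"
proof (induction cs arbitrary: ds)
  case (Cons c cs)
  obtain ds1 ds2 where ds: "ds = ds1 @ c # ds2"
    using Cons.prems(1) by (metis list.set_intros(1) set_mset_mset split_list)
  have "mset cs = mset (ds1 @ ds2)" using Cons.prems(1) ds by simp
  moreover have "differentiable_pos (length cs) g"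
    by (rule differentiable_pos_Suc_imp) (use Cons.prems(2) in simp)
  ultimately have IH: "\<forall>x>0. foldr euler cs g x = foldr euler (ds1 @ ds2) g x"
    by (rule Cons.IH)
  have "length ds = Suc (length cs)" using mset_eq_length[OF Cons.prems(1)] by simp
  then have "\<forall>x>0. foldr euler ds g x = euler c (foldr euler (ds1 @ ds2) g) x"
    using foldr_euler_move[of ds1 c ds2 g] Cons.prems(2) ds by simp
  then show ?case using euler_cong_pos[OF IH, of c] by simp
qed simp

lemma has_real_derivative_div_power:
  assumes "(Q has_real_derivative Q') (at x)" "x \<noteq> 0"
  shows "((\<lambda>t. Q t / t ^ n) has_real_derivative (x * Q' - real n * Q x) / x ^ Suc n) (at x)"
proof -
  have "((\<lambda>t. Q t / t ^ n) has_real_derivative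
      (Q' * x ^ n - Q x * (real n * x ^ (n - 1))) / (x ^ n * x ^ n)) (at x)"
    using assms by (auto intro!: derivative_eq_intros)
  moreover have "(Q' * x ^ n - Q x * (real n * x ^ (n - 1))) / (x ^ n * x ^ n)
      = (x * Q' - real n * Q x) / x ^ Suc n"
    using assms(2) by (cases n) (simp_all add: field_simps)
  ultimately show ?thesis by simp
qed

lemma deriv_div_power:
  "Q differentiable (at x) \<Longrightarrow> x \<noteq> 0 \<Longrightarrow> deriv (\<lambda>t. Q t / t ^ n) x = euler (real n) Q x / x ^ Suc n"
  unfolding euler_def
  by (intro DERIV_imp_deriv has_real_derivative_div_power real_differentiable_imp_DERIV_deriv)

lemma xinvD_div_power:
  "Q differentiable (at x) \<Longrightarrow> x \<noteq> 0 \<Longrightarrow> xinvD (\<lambda>t. Q t / t ^ n) x = euler (real n) Q x / x ^ (n + 2)"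
  by (simp add: xinvD_def deriv_div_power)

definition xinvD_exponents :: "nat \<Rightarrow> real list" where
  "xinvD_exponents m = map (\<lambda>k. 2 * real k) (rev [0..<m])"

lemma length_xinvD_exponents [simp]: "length (xinvD_exponents m) = m"
  by (simp add: xinvD_exponents_def)

lemma xinvD_power_eq_foldr_euler:
  "differentiable_pos m g \<Longrightarrow> x > 0
    \<Longrightarrow> (xinvD ^^ m) g x = foldr euler (xinvD_exponents m) g x / x ^ (2 * m)"
proof (induction m arbitrary: x)
  case (Suc m)
  let ?Q = "foldr euler (xinvD_exponents m) g"
  have "\<forall>t>0. (xinvD ^^ m) g t = ?Q t / t ^ (2 * m)"
    using Suc differentiable_pos_Suc_imp by blast
  then have "(xinvD ^^ Suc m) g x = xinvD (\<lambda>t. ?Q t / t ^ (2 * m)) x"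
    using deriv_cong_pos Suc.prems(2) by (simp add: xinvD_def)
  moreover have "?Q differentiable (at x)"
    using differentiable_pos_foldr_euler[of "xinvD_exponents m" 1 g] Suc.prems
    by (simp add: xinvD_exponents_def)
  ultimately show ?case
    using Suc.prems(2) by (simp add: xinvD_div_power xinvD_exponents_def)
qed (simp add: xinvD_exponents_def)

lemma Bop_cong_pos:
  assumes "\<forall>t>0. f t = g t" "x > 0"
  shows "Bop a f x = Bop a g x"
proof -
  have "\<forall>t>0. deriv f t = deriv g t" using assms(1) deriv_cong_pos by blast
  then show ?thesis
    using assms deriv_cong_pos[of "deriv f" "deriv g" x] deriv_cong_pos[of f g x] by (simp add: Bop_def)
qed

lemma Bop_div_power:
  assumes Q: "differentiable_pos 2 Q" and x: "x > 0"
  shows "Bop a (\<lambda>t. Q t / t ^ n) x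
    = euler (real n - 2 * real a - 2) (euler (real n + 2) Q) x / x ^ (n + 2)"
proof -
  have "\<forall>t>0. Q differentiable (at t)" using Q by (simp add: numeral_2_eq_2)
  then have d1: "\<forall>t>0. deriv (\<lambda>t. Q t / t ^ n) t = euler (real n) Q t / t ^ Suc n"
    by (simp add: deriv_div_power)
  then have "deriv (deriv (\<lambda>t. Q t / t ^ n)) x = deriv (\<lambda>t. euler (real n) Q t / t ^ Suc n) x"
    using x by (rule deriv_cong_pos)
  also have "\<dots> = euler (real (Suc n)) (euler n Q) x / x ^ Suc (Suc n)"
    using differentiable_pos_euler[of 1 Q] Q x by (intro deriv_div_power) (auto simp: numeral_2_eq_2)
  finally have d2: "deriv (deriv (\<lambda>t. Q t / t ^ n)) x = euler (real (Suc n)) (euler n Q) x / x ^ Suc (Suc n)" .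
  show ?thesis
    using x unfolding Bop_def d2 d1[rule_format, OF x] euler_euler[OF Q x]
    by (simp add: euler_def field_simps power2_eq_square)
qed

fun Bop_exponents :: "nat \<Rightarrow> nat \<Rightarrow> real list" where
  "Bop_exponents a 0 = []"
| "Bop_exponents a (Suc m) = (2 * real m - 2 * real a - 2) # (2 * real m + 2) # Bop_exponents a m"

lemma length_Bop_exponents [simp]: "length (Bop_exponents a m) = 2 * m"
  by (induction m) auto

lemma Bop_power_eq_foldr_euler:
  "differentiable_pos (2 * m) y \<Longrightarrow> x > 0
    \<Longrightarrow> (Bop a ^^ m) y x = foldr euler (Bop_exponents a m) y x / x ^ (2 * m)"
proof (induction m arbitrary: x)
  case (Suc m)
  let ?Q = "foldr euler (Bop_exponents a m) y"
  have "\<forall>t>0. (Bop a ^^ m) y t = ?Q t / t ^ (2 * m)"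
    using Suc differentiable_pos_add_imp[of 2 "2 * m" y] by simp
  then have "(Bop a ^^ Suc m) y x = Bop a (\<lambda>t. ?Q t / t ^ (2 * m)) x"
    using Suc.prems(2) by (simp add: Bop_cong_pos)
  moreover have "differentiable_pos 2 ?Q"
    using differentiable_pos_foldr_euler[of "Bop_exponents a m" 2 y] Suc.prems(1)
    by (simp add: add.commute)
  ultimately show ?case
    using Suc.prems(2) by (simp add: Bop_div_power)
qed simp

lemma euler_mult_power:
  assumes "h differentiable (at x)"
  shows "euler c (\<lambda>t. t ^ a * h t) x = x ^ a * euler (c - real a) h x"
proof -
  have "deriv (\<lambda>t. t ^ a * h t) x = real a * x ^ (a - 1) * h x + x ^ a * deriv h x"
    using assms by (auto intro!: DERIV_imp_deriv derivative_eq_intros real_differentiable_imp_DERIV_deriv)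
  then show ?thesis
    unfolding euler_def by (cases a) (simp_all add: algebra_simps)
qed

lemma foldr_euler_mult_power:
  "differentiable_pos (length cs) h \<Longrightarrow> x > 0
    \<Longrightarrow> foldr euler cs (\<lambda>t. t ^ a * h t) x = x ^ a * foldr euler (map (\<lambda>c. c - real a) cs) h x"
proof (induction cs arbitrary: x)
  case (Cons c cs)
  let ?h = "foldr euler (map (\<lambda>c. c - real a) cs) h"
  have "\<forall>t>0. foldr euler cs (\<lambda>t. t ^ a * h t) t = t ^ a * ?h t"
    using Cons differentiable_pos_Suc_imp[of "length cs" h] by simp
  then have "foldr euler (c # cs) (\<lambda>t. t ^ a * h t) x = euler c (\<lambda>t. t ^ a * ?h t) x"
    using euler_cong_pos Cons.prems(2) by fastforce
  moreover have "?h differentiable (at x)"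
    using differentiable_pos_foldr_euler[of "map (\<lambda>c. c - real a) cs" 1 h] Cons.prems by simp
  ultimately show ?case by (simp add: euler_mult_power)
qed simp

lemma mset_Bop_exponents:
  "mset (Bop_exponents a m)
    = mset (map (\<lambda>k. 2 * real k - 2 * real a - 2) [0..<m]) + mset (map (\<lambda>k. 2 * real k + 2) [0..<m])"
  by (induction m) auto

lemma mset_Bop_exponents_eq_shifted_xinvD_exponents:
  "mset (Bop_exponents a (a + 2)) = mset (map (\<lambda>c. c - real (2 * a + 2)) (xinvD_exponents (2 * a + 4)))"
proof -
  have "[0..<2 * a + 4] = [0..<(a + 2) + (a + 2)]" by (rule arg_cong[where f = "upt 0"]) simp
  also have "\<dots> = [0..<a + 2] @ map (\<lambda>k. k + (a + 2)) [0..<a + 2]"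
    by (simp only: upt_add_eq_append[OF le0, of "a + 2" "a + 2"] map_add_upt[of "a + 2" "a + 2"])
  finally have "[0..<2 * a + 4] = [0..<a + 2] @ map (\<lambda>k. k + (a + 2)) [0..<a + 2]" .
  then show ?thesis
    unfolding mset_Bop_exponents xinvD_exponents_def
    by (simp del: upt_Suc add: multiset.map_comp o_def algebra_simps)
qed

lemma weighted_xinvD_power_eq_Bop_power:
  assumes "Cn_on (2 * a + 4) {0<..} y" and x: "x > 0"
  shows "x ^ 2 * (xinvD ^^ (2 * a + 4)) (\<lambda>t. t ^ (2 * a + 2) * y t) x = (Bop a ^^ (a + 2)) y x"
proof -
  let ?cs = "map (\<lambda>c. c - real (2 * a + 2)) (xinvD_exponents (2 * a + 4))"
  have y: "differentiable_pos (2 * a + 4) y"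
    using assms(1) by (rule Cn_on_imp_differentiable_pos)
  then have "(xinvD ^^ (2 * a + 4)) (\<lambda>t. t ^ (2 * a + 2) * y t) x
      = foldr euler (xinvD_exponents (2 * a + 4)) (\<lambda>t. t ^ (2 * a + 2) * y t) x / x ^ (2 * (2 * a + 4))"
    using x by (intro xinvD_power_eq_foldr_euler differentiable_pos_mult differentiable_pos_power)
  also have "\<dots> = x ^ (2 * a + 2) * foldr euler ?cs y x / x ^ (2 * (2 * a + 4))"
    using y x by (subst foldr_euler_mult_power) (simp_all add: xinvD_exponents_def)
  also have "\<dots> = x ^ (2 * a + 2) * foldr euler (Bop_exponents a (a + 2)) y x / x ^ (2 * (2 * a + 4))"
    using foldr_euler_perm[OF mset_Bop_exponents_eq_shifted_xinvD_exponents[of a, symmetric], where g = y] y x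
    by (simp add: algebra_simps)
  also have "\<dots> = x ^ (2 * a + 2) * ((Bop a ^^ (a + 2)) y x * x ^ (2 * (a + 2))) / x ^ (2 * (2 * a + 4))"
  proof -
    have "2 * a + 4 = 2 * (a + 2)" by simp
    then have "differentiable_pos (2 * (a + 2)) y" using y by metis
    then have "(Bop a ^^ (a + 2)) y x = foldr euler (Bop_exponents a (a + 2)) y x / x ^ (2 * (a + 2))"
      using x by (rule Bop_power_eq_foldr_euler)
    then show ?thesis using x by simp
  qed
  also have "\<dots> = (Bop a ^^ (a + 2)) y x / x ^ 2"
  proof -
    have "2 * (2 * a + 4) = 2 + ((2 * a + 2) + 2 * (a + 2))" by simp
    then have "x ^ (2 * (2 * a + 4)) = x ^ 2 * (x ^ (2 * a + 2) * x ^ (2 * (a + 2)))"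
      by (metis power_add)
    then show ?thesis using x by simp
  qed
  finally show ?thesis
    using x by (simp add: field_simps)
qed

section \<open>Even power series and parts (b), (c)\<close>

definition pser :: "(nat \<Rightarrow> real) \<Rightarrow> real \<Rightarrow> real" where
  "pser c z = (\<Sum>n. c n * z ^ n)"

definition entire :: "(nat \<Rightarrow> real) \<Rightarrow> bool" where
  "entire c \<longleftrightarrow> (\<forall>z. summable (\<lambda>n. c n * z ^ n))"

definition even_pser :: "(nat \<Rightarrow> real) \<Rightarrow> real \<Rightarrow> real" where
  "even_pser c x = pser c (x\<^sup>2)"

definition shift_coeffs :: "nat \<Rightarrow> (nat \<Rightarrow> real) \<Rightarrow> nat \<Rightarrow> real" where
  "shift_coeffs m c k = (if k < m then 0 else c (k - m))"

lemma entire_diffs: "entire c \<Longrightarrow> entire (diffs c)"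
  unfolding entire_def by (intro allI termdiff_converges_all) auto

lemma entire_cmult: "entire c \<Longrightarrow> entire (\<lambda>n. a * c n)"
  unfolding entire_def by (auto simp: mult.assoc intro: summable_mult)

lemma entire_add: "entire c \<Longrightarrow> entire d \<Longrightarrow> entire (\<lambda>n. c n + d n)"
  unfolding entire_def by (auto simp: distrib_right intro: summable_add)

lemma pser_sums: "entire c \<Longrightarrow> (\<lambda>n. c n * z ^ n) sums pser c z"
  unfolding entire_def pser_def by (intro summable_sums) auto

lemma pser_cmult: "entire c \<Longrightarrow> pser (\<lambda>n. a * c n) z = a * pser c z"
  unfolding entire_def pser_def by (simp add: mult.assoc suminf_mult)

lemma pser_add: "entire c \<Longrightarrow> entire d \<Longrightarrow> pser (\<lambda>n. c n + d n) z = pser c z + pser d z"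
  unfolding entire_def pser_def by (simp add: distrib_right suminf_add)

lemma shift_coeffs_sums:
  assumes "entire c"
  shows "(\<lambda>n. shift_coeffs m c n * z ^ n) sums (z ^ m * pser c z)"
proof -
  have "(\<lambda>n. shift_coeffs m c (n + m) * z ^ (n + m)) = (\<lambda>n. z ^ m * (c n * z ^ n))"
    by (auto simp: shift_coeffs_def power_add algebra_simps)
  then have "(\<lambda>n. shift_coeffs m c (n + m) * z ^ (n + m)) sums (z ^ m * pser c z)"
    using sums_mult[OF pser_sums[OF assms]] by simp
  moreover have "(\<Sum>i<m. shift_coeffs m c i * z ^ i) = 0"
    by (simp add: shift_coeffs_def)
  ultimately show ?thesis
    using sums_iff_shift[of "\<lambda>n. shift_coeffs m c n * z ^ n" m] by simp
qed

lemma entire_shift_coeffs: "entire c \<Longrightarrow> entire (shift_coeffs m c)"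
  unfolding entire_def using shift_coeffs_sums sums_summable entire_def by blast

lemma pser_shift_coeffs: "entire c \<Longrightarrow> pser (shift_coeffs m c) z = z ^ m * pser c z"
  using shift_coeffs_sums[of c m z] by (simp add: sums_iff pser_def)

lemma even_pser_add_cmult:
  "entire c \<Longrightarrow> entire d \<Longrightarrow> even_pser c x + b * even_pser d x = even_pser (\<lambda>k. c k + b * d k) x"
  unfolding even_pser_def by (simp add: pser_add entire_cmult pser_cmult)

lemma even_pser_zero: "even_pser (\<lambda>k. 0) x = 0"
  by (simp add: even_pser_def pser_def)

lemma has_real_derivative_even_pser:
  assumes "entire c"
  shows "(even_pser c has_real_derivative 2 * x * even_pser (diffs c) x) (at x)"
proof -
  have "(pser c has_real_derivative pser (diffs c) (x\<^sup>2)) (at (x\<^sup>2))"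
    using assms unfolding entire_def pser_def by (intro termdiffs_strong_converges_everywhere) auto
  from DERIV_chain2[OF this DERIV_pow[of 2 x]] show ?thesis
    by (simp add: even_pser_def[abs_def] mult_ac)
qed

lemma deriv_even_pser: "entire c \<Longrightarrow> deriv (even_pser c) x = 2 * x * even_pser (diffs c) x"
  by (rule DERIV_imp_deriv[OF has_real_derivative_even_pser])

definition xinvD_coeffs :: "(nat \<Rightarrow> real) \<Rightarrow> nat \<Rightarrow> real" where
  "xinvD_coeffs c = (\<lambda>k. 2 * diffs c k)"

lemma entire_xinvD_coeffs_power: "entire c \<Longrightarrow> entire ((xinvD_coeffs ^^ m) c)"
  by (induction m) (auto simp: xinvD_coeffs_def intro: entire_cmult entire_diffs)

lemma xinvD_coeffs_power:
  "(xinvD_coeffs ^^ m) c k = 2 ^ m * pochhammer (real k + 1) m * c (k + m)"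
proof (induction m arbitrary: k)
  case (Suc m)
  have "(xinvD_coeffs ^^ Suc m) c k = 2 * (real (Suc k) * (xinvD_coeffs ^^ m) c (Suc k))"
    by (simp add: xinvD_coeffs_def diffs_def)
  then show ?case
    unfolding Suc pochhammer_rec by (simp add: algebra_simps)
qed simp

lemma xinvD_power_even_pser:
  "entire c \<Longrightarrow> x > 0 \<Longrightarrow> (xinvD ^^ m) (even_pser c) x = even_pser ((xinvD_coeffs ^^ m) c) x"
proof (induction m arbitrary: x)
  case (Suc m)
  have e: "entire ((xinvD_coeffs ^^ m) c)"
    using Suc.prems(1) by (rule entire_xinvD_coeffs_power)
  have "\<forall>t>0. (xinvD ^^ m) (even_pser c) t = even_pser ((xinvD_coeffs ^^ m) c) t"
    using Suc by blast
  then have "(xinvD ^^ Suc m) (even_pser c) x = deriv (even_pser ((xinvD_coeffs ^^ m) c)) x / x"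
    using Suc.prems(2) deriv_cong_pos by (simp only: funpow.simps o_apply xinvD_def)
  also have "\<dots> = even_pser ((xinvD_coeffs ^^ Suc m) c) x"
    using Suc.prems(2) pser_cmult[OF entire_diffs[OF e], of 2]
    by (simp add: deriv_even_pser[OF e] even_pser_def xinvD_coeffs_def)
  finally show ?case .
qed simp

definition L2_coeffs :: "nat \<Rightarrow> (nat \<Rightarrow> real) \<Rightarrow> nat \<Rightarrow> real" where
  "L2_coeffs a c = (\<lambda>k. (4 * real a + 4) * diffs c k + shift_coeffs 1 (\<lambda>k. 4 * diffs (diffs c) k) k)"

definition Lhigh_coeffs :: "nat \<Rightarrow> (nat \<Rightarrow> real) \<Rightarrow> nat \<Rightarrow> real" where
  "Lhigh_coeffs a c =
    (\<lambda>k. (-1) ^ (a + 1) * shift_coeffs 1 ((xinvD_coeffs ^^ (2 * a + 4)) (shift_coeffs (a + 1) c)) k)"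

lemma entire_L2_coeffs: "entire c \<Longrightarrow> entire (L2_coeffs a c)"
  unfolding L2_coeffs_def by (intro entire_add entire_cmult entire_shift_coeffs entire_diffs)

lemma entire_Lhigh_coeffs: "entire c \<Longrightarrow> entire (Lhigh_coeffs a c)"
  unfolding Lhigh_coeffs_def by (intro entire_cmult entire_shift_coeffs entire_xinvD_coeffs_power)

lemma L2_coeffs_eq: "L2_coeffs a c k = 4 * (real k + 1) * (real k + real a + 1) * c (Suc k)"
  by (cases k) (simp_all add: L2_coeffs_def shift_coeffs_def diffs_def algebra_simps)

lemma Lhigh_coeffs_eq:
  "Lhigh_coeffs a c k = (if k = 0 then 0 else
     (-1) ^ (a + 1) * 2 ^ (2 * a + 4) * pochhammer (real k) (2 * a + 4) * c (k + a + 2))"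
proof (cases k)
  case (Suc j)
  have "j + (2 * a + 4) - (a + 1) = Suc j + a + 2" by simp
  then have "shift_coeffs (a + 1) c (j + (2 * a + 4)) = c (Suc j + a + 2)"
    by (simp only: shift_coeffs_def) simp
  then show ?thesis using Suc by (simp add: Lhigh_coeffs_def shift_coeffs_def xinvD_coeffs_power add.commute)
qed (simp add: Lhigh_coeffs_def shift_coeffs_def)

lemma L2_even_pser:
  assumes "entire c" "x \<noteq> 0"
  shows "L2 a (even_pser c) x = even_pser (L2_coeffs a c) x"
proof -
  have c1: "entire (diffs c)" and c2: "entire (diffs (diffs c))"
    using assms(1) entire_diffs by blast+
  have "deriv (deriv (even_pser c)) x = 2 * even_pser (diffs c) x + 4 * x\<^sup>2 * even_pser (diffs (diffs c)) x"
    unfolding deriv_even_pser[OF assms(1), abs_def]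
    by (intro DERIV_imp_deriv)
      (auto intro!: derivative_eq_intros has_real_derivative_even_pser[OF c1] simp: power2_eq_square)
  then have "L2 a (even_pser c) x
      = (4 * real a + 4) * pser (diffs c) (x\<^sup>2) + x\<^sup>2 * (4 * pser (diffs (diffs c)) (x\<^sup>2))"
    using assms(2) by (simp add: L2_def deriv_even_pser[OF assms(1)] even_pser_def field_simps)
  also have "\<dots> = even_pser (L2_coeffs a c) x"
    unfolding L2_coeffs_def even_pser_def
    by (simp add: pser_add pser_cmult pser_shift_coeffs entire_cmult entire_shift_coeffs c1 c2)
  finally show ?thesis .
qed

lemma Lhigh_even_pser:
  assumes "entire c" "x > 0"
  shows "Lhigh a (even_pser c) x = even_pser (Lhigh_coeffs a c) x"
proof -
  let ?d = "(xinvD_coeffs ^^ (2 * a + 4)) (shift_coeffs (a + 1) c)"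
  have s: "entire (shift_coeffs (a + 1) c)" using assms(1) by (rule entire_shift_coeffs)
  then have d: "entire ?d" by (rule entire_xinvD_coeffs_power)
  have weight: "(\<lambda>t. t ^ (2 * a + 2) * even_pser c t) = even_pser (shift_coeffs (a + 1) c)"
  proof
    fix t :: real
    have "t ^ (2 * a + 2) = (t\<^sup>2) ^ (a + 1)" by (simp only: power_mult[symmetric]) (simp add: algebra_simps)
    then show "t ^ (2 * a + 2) * even_pser c t = even_pser (shift_coeffs (a + 1) c) t"
      by (simp add: even_pser_def pser_shift_coeffs[OF assms(1)])
  qed
  have "Lhigh a (even_pser c) x = (-1) ^ (a + 1) * (x\<^sup>2 * even_pser ?d x)"
    unfolding Lhigh_def weight xinvD_power_even_pser[OF s assms(2)] by simp
  also have "\<dots> = (-1) ^ (a + 1) * pser (shift_coeffs 1 ?d) (x\<^sup>2)"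
    unfolding even_pser_def pser_shift_coeffs[OF d] by simp
  also have "\<dots> = even_pser (Lhigh_coeffs a c) x"
    unfolding Lhigh_coeffs_def even_pser_def by (rule pser_cmult[OF entire_shift_coeffs[OF d], symmetric])
  finally show ?thesis .
qed

definition besselJ_coeffs :: "real \<Rightarrow> real \<Rightarrow> nat \<Rightarrow> real" where
  "besselJ_coeffs g lam k = (- lam\<^sup>2 / 4) ^ k / (pochhammer (g + 1) k * fact k)"

lemma besselJ_eq_even_pser: "besselJ g lam x = even_pser (besselJ_coeffs g lam) x"
proof -
  have "- (lam * x)\<^sup>2 / 4 = (- lam\<^sup>2 / 4) * x\<^sup>2"
    by (simp add: power_mult_distrib)
  then have "(- (lam * x)\<^sup>2 / 4) ^ k = (- lam\<^sup>2 / 4) ^ k * (x\<^sup>2) ^ k" for k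
    by (simp only: power_mult_distrib)
  then show ?thesis
    unfolding besselJ_def hyp0F1_def even_pser_def pser_def besselJ_coeffs_def by simp
qed

lemma fact_add_eq_pochhammer: "fact (n + k) = (fact n * pochhammer (real n + 1) k :: real)"
  using pochhammer_product'[of 1 n k] by (simp add: pochhammer_fact add.commute)

lemma besselJ_coeffs_of_nat:
  "besselJ_coeffs (real n) lam k = (- lam\<^sup>2 / 4) ^ k * fact n / (fact (n + k) * fact k)"
  unfolding besselJ_coeffs_def fact_add_eq_pochhammer by simp

lemma entire_besselJ_coeffs: "entire (besselJ_coeffs (real n) lam)"
  unfolding entire_def
proof
  fix z :: real
  show "summable (\<lambda>k. besselJ_coeffs (real n) lam k * z ^ k)"
  proof (rule summable_comparison_test[OF _ summable_exp[of "\<bar>lam\<^sup>2 / 4 * z\<bar>"]], intro exI allI impI)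
    fix k :: nat
    have "norm (besselJ_coeffs (real n) lam k * z ^ k)
        = (lam\<^sup>2 / 4) ^ k * \<bar>z\<bar> ^ k / fact k * (fact n / fact (n + k))"
      unfolding besselJ_coeffs_of_nat by (simp add: abs_mult power_abs mult_ac)
    also have "\<dots> \<le> (lam\<^sup>2 / 4) ^ k * \<bar>z\<bar> ^ k / fact k"
      by (rule mult_left_le) (simp_all add: fact_mono)
    finally show "norm (besselJ_coeffs (real n) lam k * z ^ k) \<le> inverse (fact k) * \<bar>lam\<^sup>2 / 4 * z\<bar> ^ k"
      by (simp add: abs_mult power_mult_distrib field_simps)
  qed
qed

lemma besselJ_coeffs_Suc:
  assumes "g > -1"
  shows "besselJ_coeffs g lam (Suc k) * ((g + real k + 1) * (real k + 1)) = - lam\<^sup>2 / 4 * besselJ_coeffs g lam k"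
proof -
  have cancel: "w / (P * A * (B * F)) * (A * B) = w / (P * F)" if "A \<noteq> 0" "B \<noteq> 0" for w P A B F :: real
    using that by simp
  have "pochhammer (g + 1) k > 0" using assms by (intro pochhammer_pos) simp
  then show ?thesis
    unfolding besselJ_coeffs_def pochhammer_Suc fact_Suc power_Suc
    using cancel[of "g + 1 + real k" "real (Suc k)"] assms by (simp add: add_ac mult_ac)
qed

lemma pochhammer_mult_besselJ_coeffs:
  "pochhammer (real k + 1) (2 * n) * besselJ_coeffs (real n) lam (k + n)
    = (- lam\<^sup>2 / 4) ^ n * besselJ_coeffs (real n) lam k"
proof -
  have "n + (k + n) = k + 2 * n" by simp
  then have "fact (n + (k + n)) = (fact k * pochhammer (real k + 1) (2 * n) :: real)"
    using fact_add_eq_pochhammer[of k "2 * n"] by metis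
  moreover have "fact (n + k) = (fact (k + n) :: real)" by (simp add: add.commute)
  moreover have "pochhammer (real k + 1) (2 * n) > 0" by (rule pochhammer_pos) simp
  ultimately show ?thesis
    unfolding besselJ_coeffs_of_nat by (simp add: power_add field_simps)
qed

lemma sign_power_besselJ:
  "(-1) ^ (a + 1) * 2 ^ (2 * a + 4) * (- lam\<^sup>2 / 4) ^ (a + 2) = - (lam ^ (2 * a + 4) :: real)"
proof -
  have "- lam\<^sup>2 / 4 = - (lam / 2)\<^sup>2" by (simp add: power_divide)
  then have "(- lam\<^sup>2 / 4) ^ (a + 2) = (-1) ^ (a + 2) * (lam / 2) ^ (2 * a + 4)"
    by (simp add: power_minus[of "(lam / 2)\<^sup>2"] power_mult[symmetric] power_add mult.commute)
  then show ?thesis by (simp add: power_divide)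
qed

lemma kconst_eq: "4 * (real a + 1) * kconst a lam = lam ^ (2 * a + 4) / (2 ^ (2 * a + 2) * fact (a + 2))"
proof -
  have "(real a + 1) * kconst a lam = (lam / 2) ^ (2 * a + 4) / fact (a + 2)"
  proof -
    have "c * (X / (c * F)) = X / F" if "c \<noteq> 0" for c X F :: real
      using that by simp
    then show ?thesis unfolding kconst_def by simp
  qed
  then have "4 * (real a + 1) * kconst a lam = 4 * (lam / 2) ^ (2 * a + 4) / fact (a + 2)"
    by (metis mult.assoc times_divide_eq_right)
  also have "\<dots> = lam ^ (2 * a + 4) / (2 ^ (2 * a + 2) * fact (a + 2))"
    by (simp add: power_divide power_add del: fact_Suc)
  finally show ?thesis .
qed

definition besselK_coeffs :: "nat \<Rightarrow> real \<Rightarrow> nat \<Rightarrow> real" where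
  "besselK_coeffs a lam = shift_coeffs 1 (\<lambda>k. - kconst a lam * besselJ_coeffs (real a + 2) lam k)"

lemma besselK_coeffs_0 [simp]: "besselK_coeffs a lam 0 = 0"
  by (simp add: besselK_coeffs_def shift_coeffs_def)

lemma besselK_coeffs_Suc [simp]:
  "besselK_coeffs a lam (Suc k) = - kconst a lam * besselJ_coeffs (real a + 2) lam k"
  by (simp add: besselK_coeffs_def shift_coeffs_def)

lemma entire_besselJ_coeffs_add_2: "entire (besselJ_coeffs (real a + 2) lam)"
  using entire_besselJ_coeffs[of "a + 2"] by (simp only: of_nat_add of_nat_numeral)

lemma entire_besselK_coeffs: "entire (besselK_coeffs a lam)"
  unfolding besselK_coeffs_def by (intro entire_shift_coeffs entire_cmult entire_besselJ_coeffs_add_2)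

lemma besselK_eq_even_pser: "besselK a lam = even_pser (besselK_coeffs a lam)"
proof
  fix x :: real
  show "besselK a lam x = even_pser (besselK_coeffs a lam) x"
    unfolding besselK_coeffs_def even_pser_def besselK_def besselJ_eq_even_pser
      pser_shift_coeffs[OF entire_cmult[OF entire_besselJ_coeffs_add_2]]
      pser_cmult[OF entire_besselJ_coeffs_add_2]
    by simp
qed

definition besselJM_coeffs :: "nat \<Rightarrow> real \<Rightarrow> real \<Rightarrow> nat \<Rightarrow> real" where
  "besselJM_coeffs a M lam = (\<lambda>k. besselJ_coeffs (real a) lam k + M * besselK_coeffs a lam k)"

lemma entire_besselJM_coeffs: "entire (besselJM_coeffs a M lam)"
  unfolding besselJM_coeffs_def
  by (intro entire_add entire_cmult entire_besselJ_coeffs entire_besselK_coeffs)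

lemma besselJM_eq_even_pser: "besselJM a M lam = even_pser (besselJM_coeffs a M lam)"
  by (simp add: fun_eq_iff besselJM_def besselJM_coeffs_def besselJ_eq_even_pser besselK_eq_even_pser
      even_pser_add_cmult entire_besselJ_coeffs entire_besselK_coeffs)

lemma L2_coeffs_besselJ:
  "L2_coeffs a (besselJ_coeffs (real a) lam) k + lam\<^sup>2 * besselJ_coeffs (real a) lam k = 0"
proof -
  have "L2_coeffs a (besselJ_coeffs (real a) lam) k
      = 4 * (besselJ_coeffs (real a) lam (Suc k) * ((real a + real k + 1) * (real k + 1)))"
    by (simp add: L2_coeffs_eq algebra_simps)
  also have "\<dots> = - lam\<^sup>2 * besselJ_coeffs (real a) lam k"
    by (simp add: besselJ_coeffs_Suc)
  finally show ?thesis by simp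
qed

lemma Lhigh_coeffs_besselK:
  "Lhigh_coeffs a (besselK_coeffs a lam) k + lam ^ (2 * a + 4) * besselK_coeffs a lam k = 0"
proof (cases k)
  case (Suc j)
  let ?J = "besselJ_coeffs (real a + 2) lam"
  have "2 * (a + 2) = 2 * a + 4" "real (a + 2) = real a + 2" "j + (a + 2) = j + a + 2"
    "real j + 1 = real (Suc j)" by simp_all
  then have "pochhammer (real (Suc j)) (2 * a + 4) * ?J (j + a + 2) = (- lam\<^sup>2 / 4) ^ (a + 2) * ?J j"
    using pochhammer_mult_besselJ_coeffs[of j "a + 2" lam] by (simp only:)
  moreover have "Suc j + a + 2 = Suc (j + a + 2)" by simp
  ultimately have "Lhigh_coeffs a (besselK_coeffs a lam) k
      = - kconst a lam * ((-1) ^ (a + 1) * 2 ^ (2 * a + 4) * (- lam\<^sup>2 / 4) ^ (a + 2)) * ?J j"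
    using Suc by (simp only: Lhigh_coeffs_eq besselK_coeffs_Suc) (simp add: algebra_simps)
  then show ?thesis
    unfolding sign_power_besselJ using Suc by simp
qed (simp add: Lhigh_coeffs_eq)

lemma L2_coeffs_besselK_Suc:
  "L2_coeffs a (besselK_coeffs a lam) (Suc j) + lam\<^sup>2 * besselK_coeffs a lam (Suc j)
    = - (4 * (real a + 1) * kconst a lam) * besselJ_coeffs (real a + 2) lam (Suc j)"
proof -
  let ?J = "besselJ_coeffs (real a + 2) lam"
  have "?J (Suc j) * ((real a + 2 + real j + 1) * (real j + 1)) = - lam\<^sup>2 / 4 * ?J j"
    by (rule besselJ_coeffs_Suc) simp
  then have rec: "lam\<^sup>2 * ?J j = - 4 * (?J (Suc j) * ((real a + 2 + real j + 1) * (real j + 1)))"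
    by simp
  have "L2_coeffs a (besselK_coeffs a lam) (Suc j) + lam\<^sup>2 * besselK_coeffs a lam (Suc j)
      = - kconst a lam * (4 * (real j + 2) * (real j + real a + 2) * ?J (Suc j) + lam\<^sup>2 * ?J j)"
    by (simp add: L2_coeffs_eq algebra_simps)
  then show ?thesis
    unfolding rec by (simp add: algebra_simps)
qed

lemma Lhigh_coeffs_besselJ_Suc_eq:
  "Lhigh_coeffs a (besselJ_coeffs (real a) lam) (Suc j)
    = - (lam ^ (2 * a + 4)) * ((real j + 2 * real a + 4) * (- lam\<^sup>2 / 4) ^ Suc j * fact a
        / (fact j * fact (a + j + 3)))"
proof -
  define w where "w = - lam\<^sup>2 / 4"
  define F :: real where "F = fact (j + 2 * a + 3)"
  have F: "fact (a + (Suc j + a + 2)) = F"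
    unfolding F_def by (rule arg_cong[where f = fact]) simp
  have H: "fact (Suc j + a + 2) = (fact (a + j + 3) :: real)"
    by (rule arg_cong[where f = fact]) simp
  have poch: "pochhammer (real (Suc j)) (2 * a + 4) = (real j + 2 * real a + 4) * F / fact j"
    using fact_add_eq_pochhammer[of j "2 * a + 4"] by (simp add: F_def field_simps numeral_eq_Suc)
  have "F > 0" unfolding F_def by simp
  then have "(-1) ^ (a + 1) * 2 ^ (2 * a + 4) * pochhammer (real (Suc j)) (2 * a + 4)
        * besselJ_coeffs (real a) lam (Suc j + a + 2)
      = ((-1) ^ (a + 1) * 2 ^ (2 * a + 4) * w ^ (a + 2))
        * ((real j + 2 * real a + 4) * w ^ Suc j * fact a / (fact j * fact (a + j + 3)))"
    unfolding poch besselJ_coeffs_of_nat F H w_def[symmetric] by (simp add: power_add field_simps)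
  then show ?thesis
    unfolding w_def sign_power_besselJ by (simp add: Lhigh_coeffs_eq)
qed

lemma Lhigh_coeffs_besselJ_Suc:
  "Lhigh_coeffs a (besselJ_coeffs (real a) lam) (Suc j) + lam ^ (2 * a + 4) * besselJ_coeffs (real a) lam (Suc j)
    = lam ^ (2 * a + 4) * besselJ_coeffs (real a + 2) lam (Suc j)"
proof -
  define G :: real where "G = fact (a + j + 1)"
  define D :: real where "D = (real j + real a + 3) * (real j + real a + 2)"
  define J :: real where "J = real j + 1"
  have G: "fact (a + Suc j) = G" unfolding G_def by simp
  have "a + j + 3 = Suc (Suc (a + j + 1))" "a + 2 + Suc j = a + j + 3" by simp_all
  then have DG: "fact (a + j + 3) = D * G" "fact (a + 2 + Suc j) = D * G"
    unfolding G_def D_def by (simp_all only: fact_Suc) (simp_all add: algebra_simps)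
  have J: "fact (Suc j) = J * fact j" unfolding J_def by simp
  have pos: "G > 0" "D > 0" "J > 0"
    unfolding G_def D_def J_def by simp_all
  have r: "real a + 2 = real (a + 2)" by simp
  show ?thesis
    unfolding Lhigh_coeffs_besselJ_Suc_eq r besselJ_coeffs_of_nat G DG J using pos
    by (simp add: field_simps) (simp add: D_def J_def algebra_simps)
qed

lemma besselJM_coeffs_coupling:
  "L2_coeffs a (besselK_coeffs a lam) k + lam\<^sup>2 * besselK_coeffs a lam k
    + 1 / (2 ^ (2 * a + 2) * fact (a + 2))
      * (Lhigh_coeffs a (besselJ_coeffs (real a) lam) k + lam ^ (2 * a + 4) * besselJ_coeffs (real a) lam k)
    = 0"
proof (cases k)
  case 0
  then show ?thesis
    using kconst_eq[of a lam] by (simp add: L2_coeffs_eq Lhigh_coeffs_eq besselJ_coeffs_def)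
next
  case (Suc j)
  then show ?thesis
    unfolding Suc L2_coeffs_besselK_Suc Lhigh_coeffs_besselJ_Suc kconst_eq by simp
qed

lemma besselJM_coeffs_ode:
  fixes a :: nat and M lam :: real
  defines "s \<equiv> besselJM_coeffs a M lam"
  shows "L2_coeffs a s k + lam\<^sup>2 * s k
    + M / (2 ^ (2 * a + 2) * fact (a + 2)) * (Lhigh_coeffs a s k + lam ^ (2 * a + 4) * s k) = 0"
proof -
  let ?J = "besselJ_coeffs (real a) lam" and ?K = "besselK_coeffs a lam"
  define c :: real where "c = 1 / (2 ^ (2 * a + 2) * fact (a + 2))"
  have "M / (2 ^ (2 * a + 2) * fact (a + 2)) = M * c" by (simp add: c_def)
  moreover have "L2_coeffs a s k = L2_coeffs a ?J k + M * L2_coeffs a ?K k"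
    "Lhigh_coeffs a s k = Lhigh_coeffs a ?J k + M * Lhigh_coeffs a ?K k"
    by (simp_all add: s_def besselJM_coeffs_def L2_coeffs_eq Lhigh_coeffs_eq algebra_simps)
  ultimately have "L2_coeffs a s k + lam\<^sup>2 * s k
      + M / (2 ^ (2 * a + 2) * fact (a + 2)) * (Lhigh_coeffs a s k + lam ^ (2 * a + 4) * s k)
    = (L2_coeffs a ?J k + lam\<^sup>2 * ?J k)
      + M * (L2_coeffs a ?K k + lam\<^sup>2 * ?K k + c * (Lhigh_coeffs a ?J k + lam ^ (2 * a + 4) * ?J k))
      + M * M * c * (Lhigh_coeffs a ?K k + lam ^ (2 * a + 4) * ?K k)"
    by (simp add: s_def besselJM_coeffs_def algebra_simps)
  then show ?thesis
    unfolding c_def L2_coeffs_besselJ besselJM_coeffs_coupling Lhigh_coeffs_besselK by simp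
qed

lemma Lhigh_besselK:
  "x > 0 \<Longrightarrow> Lhigh a (besselK a lam) x + lam ^ (2 * a + 4) * besselK a lam x = 0"
  unfolding besselK_eq_even_pser
  by (simp add: Lhigh_even_pser even_pser_add_cmult entire_besselK_coeffs entire_Lhigh_coeffs
      Lhigh_coeffs_besselK even_pser_zero)

lemma besselJM_ode:
  assumes "x > 0"
  shows "(L2 a (besselJM a M lam) x + lam\<^sup>2 * besselJM a M lam x)
    + M / (2 ^ (2 * a + 2) * fact (a + 2))
      * (Lhigh a (besselJM a M lam) x + lam ^ (2 * a + 4) * besselJM a M lam x) = 0"
proof -
  let ?s = "besselJM_coeffs a M lam"
  have s: "entire ?s" by (rule entire_besselJM_coeffs)
  have L2: "L2 a (besselJM a M lam) x + lam\<^sup>2 * besselJM a M lam x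
      = even_pser (\<lambda>k. L2_coeffs a ?s k + lam\<^sup>2 * ?s k) x"
    using assms by (simp add: besselJM_eq_even_pser L2_even_pser even_pser_add_cmult entire_L2_coeffs s)
  have Lhigh: "Lhigh a (besselJM a M lam) x + lam ^ (2 * a + 4) * besselJM a M lam x
      = even_pser (\<lambda>k. Lhigh_coeffs a ?s k + lam ^ (2 * a + 4) * ?s k) x"
    using assms by (simp add: besselJM_eq_even_pser Lhigh_even_pser even_pser_add_cmult entire_Lhigh_coeffs s)
  have e: "entire (\<lambda>k. L2_coeffs a ?s k + lam\<^sup>2 * ?s k)"
    "entire (\<lambda>k. Lhigh_coeffs a ?s k + lam ^ (2 * a + 4) * ?s k)"
    by (intro entire_add entire_cmult entire_L2_coeffs entire_Lhigh_coeffs s)+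
  show ?thesis
    unfolding L2 Lhigh even_pser_add_cmult[OF e] besselJM_coeffs_ode by (rule even_pser_zero)
qed

theorem theorem5p1:
  fixes \<alpha> :: nat and M :: real
  assumes "M \<ge> 0"
  shows "(\<forall>y. Cn_on (2 * \<alpha> + 4) {0<..} y \<longrightarrow>
            (\<forall>x>0. x ^ 2 * (xinvD ^^ (2 * \<alpha> + 4)) (\<lambda>t. t ^ (2 * \<alpha> + 2) * y t) x
                   = (Bop \<alpha> ^^ (\<alpha> + 2)) y x))
       \<and> (\<forall>lam\<ge>0. \<forall>x>0.
            (L2 \<alpha> (besselJM \<alpha> M lam) x + lam ^ 2 * besselJM \<alpha> M lam x)
            + M / (2 ^ (2 * \<alpha> + 2) * fact (\<alpha> + 2)) *
              (Lhigh \<alpha> (besselJM \<alpha> M lam) x + lam ^ (2 * \<alpha> + 4) * besselJM \<alpha> M lam x) = 0)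
       \<and> (\<forall>lam\<ge>0. \<forall>x>0.
            Lhigh \<alpha> (besselK \<alpha> lam) x + lam ^ (2 * \<alpha> + 4) * besselK \<alpha> lam x = 0)"
  \<comment> \<open>The identities hold for every real M and lam.\<close>
  using weighted_xinvD_power_eq_Bop_power besselJM_ode Lhigh_besselK by blast

end
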